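(* Let $\mathcal S$ be a complete separable metric space, $a,\rho,k>0$, and let $N$ be a point process on $\mathcal S$ such that (I) $N$ is almost surely boundedly finite and has no fixed atoms (i.e. $P\{N(\{x\})>0\}=0$ for every $x\in\mathcal S$); and (II) there is a function $m$ from the bounded Borel sets of $\mathcal S$ to $[0,\infty)$ such that for every finite family of pairwise disjoint bounded Borel sets $A_1,\dots,A_l$, the vector $(N(A_1),\dots,N(A_l))$ has the $\mathrm{MGWD}(a;k\,m(A_1),\dots,k\,m(A_l);\rho)$ distribution. Then there exists a boundedly finite nonatomic Borel measure $\mu$ on $\mathcal S$ with $\mu(A)=m(A)$ and $$P_0(A):=P\{N(A)=0\}=\frac{\rho_{(k\mu(A))}}{(\rho+a)_{(k\mu(A))}}$$ for every bounded Borel set $A$.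
   Context: For $x>0$, $\beta\ge0$ write $x_{(\beta)}=\Gamma(x+\beta)/\Gamma(x)$, with $0_{(0)}=1$ and $0_{(n)}=0$ for integers $n\ge1$. For $a,\rho>0$ and $k_1,\dots,k_s\ge 0$, $\mathrm{MGWD}(a;k_1,\dots,k_s;\rho)$ denotes the law on $\{0,1,2,\dots\}^s$ with $P(X_i=x_i,\ i=1,\dots,s)=\frac{\rho_{(\sum_i k_i)}\,a_{(\sum_i x_i)}}{(\rho+a)_{(\sum_i k_i+\sum_i x_i)}}\prod_{i=1}^s\frac{(k_i)_{(x_i)}}{x_i!}$. *)

theory Defs
  imports "HOL-Probability.Probability"
begin

definition rfact :: "real \<Rightarrow> real \<Rightarrow> real" where
  "rfact x \<beta> = (if x = 0 then (if \<beta> = 0 then 1 else 0) else Gamma (x + \<beta>) / Gamma x)"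

definition mgwd :: "real \<Rightarrow> (nat \<Rightarrow> real) \<Rightarrow> real \<Rightarrow> nat \<Rightarrow> (nat \<Rightarrow> nat) \<Rightarrow> real" where
  "mgwd a ks \<rho> l xs =
     rfact \<rho> (\<Sum>i<l. ks i) * rfact a (\<Sum>i<l. real (xs i))
     / rfact (\<rho> + a) ((\<Sum>i<l. ks i) + (\<Sum>i<l. real (xs i)))
     * (\<Prod>i<l. rfact (ks i) (real (xs i)) / fact (xs i))"

definition bdd_borel :: "'a::metric_space set \<Rightarrow> bool" where
  "bdd_borel A \<longleftrightarrow> A \<in> sets borel \<and> bounded A"

end

theory Submission imports Defs begin

text \<open>Setting every count to zero in the MGWD law shows that the void probability of a
  disjoint union A_1 \<union> ... \<union> A_l is P_0(k (m(A_1) + ... + m(A_l))), where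
  P_0(c) = \<rho>_(c) / (\<rho>+a)_(c) is, up to a constant, \<Gamma>(\<rho>+c) / \<Gamma>(\<rho>+a+c). Since \<Gamma> is
  log-convex, P_0 is strictly decreasing with P_0(0) = 1; in particular it is injective, so
  comparing the events {N(A \<union> B) = 0} and {N(A) = N(B) = 0} makes m additive. If bounded
  Borel sets A_n decrease to the empty set, the integer N(A_n) almost surely vanishes
  eventually, so P_0(k m(A_n)) \<longrightarrow> 1, which forces m(A_n) \<longrightarrow> 0. Caratheodory's theorem
  then extends m to a Borel measure, and the absence of fixed atoms gives
  P_0(k m({x})) = 1, i.e. m({x}) = 0.\<close>

lemma Gamma_ratio_strict_antimono:
  fixes a x y :: real
  assumes "a > 0" "0 < x" "x < y"
  shows "Gamma y / Gamma (y + a) < Gamma x / Gamma (x + a)"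
proof -
  define h where "h t = ln_Gamma t - ln_Gamma (t + a)" for t
  have "\<exists>z. x < z \<and> z < y \<and> h y - h x = (y - x) * (Digamma z - Digamma (z + a))"
    unfolding h_def using assms by (intro MVT2) (auto intro!: derivative_eq_intros)
  then obtain z where z: "x < z" "z < y" "h y - h x = (y - x) * (Digamma z - Digamma (z + a))"
    by blast
  have "Digamma z < Digamma (z + a)"
    using assms z by (intro Digamma_real_strict_mono) auto
  then have "(y - x) * (Digamma z - Digamma (z + a)) < 0"
    using z by (intro mult_pos_neg) auto
  with z have "h y < h x"
    by simp
  moreover have "Gamma t / Gamma (t + a) = exp (h t)" if "t > 0" for t
    using that assms by (simp add: h_def exp_diff Gamma_real_pos_exp)
  ultimately show ?thesis
    using assms by simp
qed

lemma rfact_0: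
  assumes "(x::real) \<ge> 0"
  shows "rfact x 0 = 1"
proof (cases "x = 0")
  case False
  with assms have "Gamma x > 0"
    by (intro Gamma_real_pos) simp
  then show ?thesis
    by (simp add: rfact_def)
qed (simp add: rfact_def)

definition void_prob :: "real \<Rightarrow> real \<Rightarrow> real \<Rightarrow> real" where
  "void_prob \<rho> a c = rfact \<rho> c / rfact (\<rho> + a) c"

lemma void_prob_0: "\<rho> \<ge> 0 \<Longrightarrow> a \<ge> 0 \<Longrightarrow> void_prob \<rho> a 0 = 1"
  by (simp add: void_prob_def rfact_0)

lemma void_prob_eq_Gamma:
  assumes "\<rho> > 0" "a > 0"
  shows "void_prob \<rho> a c = Gamma (\<rho> + a) / Gamma \<rho> * (Gamma (\<rho> + c) / Gamma (\<rho> + c + a))"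
  using assms Gamma_real_pos[of \<rho>] Gamma_real_pos[of "\<rho> + a"]
  by (simp add: void_prob_def rfact_def ac_simps)

lemma void_prob_strict_antimono:
  assumes "\<rho> > 0" "a > 0" "0 \<le> c" "c < d"
  shows "void_prob \<rho> a d < void_prob \<rho> a c"
proof -
  have "Gamma (\<rho> + a) / Gamma \<rho> > 0"
    using assms Gamma_real_pos[of \<rho>] Gamma_real_pos[of "\<rho> + a"] by simp
  moreover have "Gamma (\<rho> + d) / Gamma (\<rho> + d + a) < Gamma (\<rho> + c) / Gamma (\<rho> + c + a)"
    using assms by (intro Gamma_ratio_strict_antimono) auto
  ultimately show ?thesis
    using assms by (simp only: void_prob_eq_Gamma mult_strict_left_mono)
qed

lemma void_prob_antimono:
  "\<rho> > 0 \<Longrightarrow> a > 0 \<Longrightarrow> 0 \<le> c \<Longrightarrow> c \<le> d \<Longrightarrow> void_prob \<rho> a d \<le> void_prob \<rho> a c"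
  using void_prob_strict_antimono[of \<rho> a c d] by (cases "c = d") auto

lemma void_prob_less_1: "\<rho> > 0 \<Longrightarrow> a > 0 \<Longrightarrow> c > 0 \<Longrightarrow> void_prob \<rho> a c < 1"
  using void_prob_strict_antimono[of \<rho> a 0 c] by (simp add: void_prob_0)

lemma void_prob_eq_iff:
  assumes "\<rho> > 0" "a > 0" "0 \<le> c" "0 \<le> d"
  shows "void_prob \<rho> a c = void_prob \<rho> a d \<longleftrightarrow> c = d"
  using void_prob_strict_antimono[OF assms(1,2,3), of d] void_prob_strict_antimono[OF assms(1,2,4), of c]
  by (cases c d rule: linorder_cases) auto

lemma mgwd_zero_counts:
  assumes "a \<ge> 0" "\<And>i. i < l \<Longrightarrow> ks i \<ge> 0"
  shows "mgwd a ks \<rho> l (\<lambda>_. 0) = void_prob \<rho> a (\<Sum>i<l. ks i)"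
proof -
  have "(\<Prod>i<l. rfact (ks i) (real 0) / fact 0) = 1"
    using assms(2) by (intro prod.neutral) (simp add: rfact_0)
  then show ?thesis
    using assms(1) by (simp add: mgwd_def void_prob_def rfact_0)
qed

lemma ring_of_sets_bdd_borel: "ring_of_sets UNIV {A :: 'a::metric_space set. bdd_borel A}"
  unfolding ring_of_sets_iff bdd_borel_def by (auto intro: bounded_subset)

lemma sigma_sets_bdd_borel: "sigma_sets UNIV {A :: 'a::metric_space set. bdd_borel A} = sets borel"
proof
  show "sigma_sets UNIV {A. bdd_borel A} \<subseteq> sets borel"
    using sets.sigma_sets_subset[of "{A. bdd_borel A}" borel] by (auto simp: bdd_borel_def)
next
  show "sets borel \<subseteq> sigma_sets UNIV {A :: 'a set. bdd_borel A}"
  proof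
    fix B :: "'a set"
    assume B: "B \<in> sets borel"
    fix c :: 'a
    have "B = (\<Union>n. B \<inter> ball c (real n))"
      using reals_Archimedean2 by auto
    moreover have "B \<inter> ball c (real n) \<in> sigma_sets UNIV {A. bdd_borel A}" for n
      using B by (intro sigma_sets.Basic) (auto simp: bdd_borel_def bounded_Int)
    ultimately show "B \<in> sigma_sets UNIV {A. bdd_borel A}"
      by (metis sigma_sets.Union)
  qed
qed

lemma ex_borel_measure_extending:
  fixes m :: "'a::metric_space set \<Rightarrow> real"
  assumes nonneg: "\<And>A. bdd_borel A \<Longrightarrow> m A \<ge> 0"
    and additive: "\<And>A B. bdd_borel A \<Longrightarrow> bdd_borel B \<Longrightarrow> A \<inter> B = {} \<Longrightarrow> m (A \<union> B) = m A + m B"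
    and continuous: "\<And>A. (\<And>i. bdd_borel (A i)) \<Longrightarrow> decseq A \<Longrightarrow> (\<Inter>i. A i) = {} \<Longrightarrow>
                       (\<lambda>i. m (A i)) \<longlonglongrightarrow> 0"
  shows "\<exists>\<mu>. sets \<mu> = sets borel \<and> (\<forall>A. bdd_borel A \<longrightarrow> emeasure \<mu> A = ennreal (m A))"
proof -
  define R where "R = {A :: 'a set. bdd_borel A}"
  define f where "f A = ennreal (m A)" for A
  interpret ring_of_sets UNIV R
    unfolding R_def by (rule ring_of_sets_bdd_borel)
  have "m {} = 0"
    using additive[of "{}" "{}"] by (simp add: bdd_borel_def)
  then have "positive R f"
    by (simp add: positive_def f_def)
  moreover have "additive R f"
    using additive nonneg by (simp add: additive_def f_def R_def ennreal_plus)
  moreover have "(\<lambda>i. f (A i)) \<longlonglongrightarrow> 0" if "range A \<subseteq> R" "decseq A" "(\<Inter>i. A i) = {}" for A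
    using tendsto_ennrealI[OF continuous[of A]] that by (auto simp: f_def R_def)
  ultimately obtain \<mu>' where \<mu>': "\<forall>A\<in>R. \<mu>' A = f A" "measure_space UNIV (sigma_sets UNIV R) \<mu>'"
    using caratheodory_empty_continuous[of f] by (auto simp: f_def)
  define \<mu> where "\<mu> = measure_of UNIV (sigma_sets UNIV R) \<mu>'"
  have "emeasure \<mu> A = ennreal (m A)" if "bdd_borel A" for A
  proof -
    have "emeasure \<mu> A = \<mu>' A"
      unfolding \<mu>_def using \<mu>'(2) that
      by (intro emeasure_measure_of_sigma) (auto simp: measure_space_def R_def)
    with \<mu>'(1) that show ?thesis
      by (simp add: R_def f_def)
  qed
  moreover have "sets \<mu> = sets borel"
    using sigma_sets_bdd_borel by (simp add: \<mu>_def R_def sigma_sets_sigma_sets_eq)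
  ultimately show ?thesis
    by blast
qed

locale mgwd_point_process = prob_space M
  for M :: "'w measure" +
  fixes N :: "'w \<Rightarrow> 'a::metric_space measure"
    and m :: "'a set \<Rightarrow> real"
    and a \<rho> k :: real
  assumes a_pos: "a > 0" and rho_pos: "\<rho> > 0" and k_pos: "k > 0"
    and sets_N: "\<And>\<omega>. sets (N \<omega>) = sets borel"
    and N_integer: "\<And>\<omega> A. A \<in> sets borel \<Longrightarrow> emeasure (N \<omega>) A \<in> range of_nat \<union> {\<infinity>}"
    and N_measurable: "\<And>A. A \<in> sets borel \<Longrightarrow> (\<lambda>\<omega>. emeasure (N \<omega>) A) \<in> borel_measurable M"
    and m_nonneg: "\<And>A. bdd_borel A \<Longrightarrow> m A \<ge> 0"
    and prob_counts_eq_mgwd: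
      "\<And>l A xs. (\<forall>i<l. bdd_borel (A i)) \<Longrightarrow> disjoint_family_on A {..<l} \<Longrightarrow>
         prob {\<omega>\<in>space M. \<forall>i<l. emeasure (N \<omega>) (A i) = of_nat (xs i)}
           = mgwd a (\<lambda>i. k * m (A i)) \<rho> l xs"
begin

definition void_event :: "'a set \<Rightarrow> 'w set" where
  "void_event A = {\<omega>\<in>space M. emeasure (N \<omega>) A = 0}"

lemma void_event_in_events: "A \<in> sets borel \<Longrightarrow> void_event A \<in> events"
  using measurable_sets[OF N_measurable, of A "{0}"]
  by (simp add: void_event_def vimage_def Int_def conj_commute)

lemma prob_void_event_UN:
  fixes l :: nat
  assumes "\<And>i. i < l \<Longrightarrow> bdd_borel (A i)" "disjoint_family_on A {..<l}"
  shows "prob (void_event (\<Union>i<l. A i)) = void_prob \<rho> a (\<Sum>i<l. k * m (A i))"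
proof -
  have "emeasure (N \<omega>) (\<Union>i<l. A i) = (\<Sum>i<l. emeasure (N \<omega>) (A i))" for \<omega>
    using assms sets_N[of \<omega>] by (intro sum_emeasure[symmetric]) (auto simp: bdd_borel_def)
  then have "void_event (\<Union>i<l. A i) = {\<omega>\<in>space M. \<forall>i<l. emeasure (N \<omega>) (A i) = of_nat 0}"
    by (auto simp: void_event_def)
  also have "prob \<dots> = mgwd a (\<lambda>i. k * m (A i)) \<rho> l (\<lambda>_. 0)"
    using assms by (intro prob_counts_eq_mgwd) auto
  also have "\<dots> = void_prob \<rho> a (\<Sum>i<l. k * m (A i))"
    using assms a_pos k_pos m_nonneg by (intro mgwd_zero_counts) auto
  finally show ?thesis .
qed

lemma prob_void_event: "bdd_borel A \<Longrightarrow> prob (void_event A) = void_prob \<rho> a (k * m A)"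
  using prob_void_event_UN[of 1 "\<lambda>_. A"] by (simp add: disjoint_family_on_def lessThan_empty_iff)

lemma m_Un:
  assumes "bdd_borel A" "bdd_borel B" "A \<inter> B = {}"
  shows "m (A \<union> B) = m A + m B"
proof -
  define F where "F i = (if i = 0 then A else B)" for i :: nat
  have F: "(\<Union>i<2. F i) = A \<union> B" "(\<Sum>i<2. k * m (F i)) = k * m A + k * m B"
    by (auto simp: F_def lessThan_nat_numeral)
  have "void_prob \<rho> a (k * m (A \<union> B)) = prob (void_event (\<Union>i<2. F i))"
    using assms prob_void_event[of "A \<union> B"] by (simp add: F bdd_borel_def sets.Un)
  also have "\<dots> = void_prob \<rho> a (k * m A + k * m B)"
    unfolding F(2)[symmetric] using assms
    by (intro prob_void_event_UN) (auto simp: F_def disjoint_family_on_def)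
  finally have "k * m (A \<union> B) = k * m A + k * m B"
    using assms rho_pos a_pos k_pos m_nonneg by (subst (asm) void_prob_eq_iff) (auto simp: bdd_borel_def)
  then show ?thesis
    using k_pos by (simp flip: distrib_left)
qed

lemma m_mono:
  assumes "bdd_borel A" "B \<subseteq> A" "B \<in> sets borel"
  shows "m B \<le> m A"
proof -
  have "bdd_borel B" "bdd_borel (A - B)"
    using assms bounded_subset[of A] by (auto simp: bdd_borel_def)
  then have "m A = m B + m (A - B)"
    using m_Un[of B "A - B"] assms by (simp add: Un_absorb1)
  then show ?thesis
    using m_nonneg[OF \<open>bdd_borel (A - B)\<close>] by simp
qed

lemma prob_void_event_decseq_tendsto_1:
  assumes finite: "AE \<omega> in M. \<forall>A. bdd_borel A \<longrightarrow> emeasure (N \<omega>) A < \<infinity>"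
    and A: "\<And>i. bdd_borel (A i)" "decseq A" "(\<Inter>i. A i) = {}"
  shows "(\<lambda>n. prob (void_event (A n))) \<longlonglongrightarrow> 1"
proof -
  have events: "void_event (A n) \<in> events" for n
    using A(1)[of n] by (simp add: bdd_borel_def void_event_in_events)
  have "incseq (\<lambda>n. void_event (A n))"
  proof (rule incseq_SucI)
    fix n
    have "emeasure (N \<omega>) (A (Suc n)) \<le> emeasure (N \<omega>) (A n)" for \<omega>
      using A sets_N[of \<omega>] by (intro emeasure_mono) (auto simp: decseq_Suc_iff bdd_borel_def)
    then show "void_event (A n) \<subseteq> void_event (A (Suc n))"
      by (auto simp: void_event_def) (metis le_zero_eq)
  qed
  with events have lim: "(\<lambda>n. prob (void_event (A n))) \<longlonglongrightarrow> prob (\<Union>n. void_event (A n))"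
    by (intro finite_Lim_measure_incseq) auto
  have "AE \<omega> in M. \<omega> \<in> (\<Union>n. void_event (A n))"
    using finite AE_space
  proof eventually_elim
    case (elim \<omega>)
    have finite_\<omega>: "emeasure (N \<omega>) (A n) \<noteq> \<infinity>" for n
      using elim(1) A(1)[of n] by fastforce
    have "(\<lambda>n. emeasure (N \<omega>) (A n)) \<longlonglongrightarrow> emeasure (N \<omega>) (\<Inter>n. A n)"
      using A sets_N[of \<omega>] finite_\<omega> by (intro Lim_emeasure_decseq) (auto simp: bdd_borel_def)
    then have "eventually (\<lambda>n. emeasure (N \<omega>) (A n) < 1) sequentially"
      using A(3) by (intro order_tendstoD(2)) auto
    then obtain n where n: "emeasure (N \<omega>) (A n) < 1"
      by (auto simp: eventually_sequentially)
    moreover obtain j :: nat where "emeasure (N \<omega>) (A n) = of_nat j"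
      using N_integer[of "A n" \<omega>] A(1)[of n] finite_\<omega>[of n] by (auto simp: bdd_borel_def)
    ultimately have "\<omega> \<in> void_event (A n)"
      using elim(2) by (simp add: void_event_def)
    then show ?case
      by blast
  qed
  moreover have "(\<Union>n. void_event (A n)) \<in> events"
    using events by blast
  ultimately have "prob (\<Union>n. void_event (A n)) = 1"
    using AE_in_set_eq_1 by blast
  with lim show ?thesis
    by simp
qed

lemma m_decseq_tendsto_0:
  assumes finite: "AE \<omega> in M. \<forall>A. bdd_borel A \<longrightarrow> emeasure (N \<omega>) A < \<infinity>"
    and A: "\<And>i. bdd_borel (A i)" "decseq A" "(\<Inter>i. A i) = {}"
  shows "(\<lambda>n. m (A n)) \<longlonglongrightarrow> 0"
proof -
  have "decseq (\<lambda>n. m (A n))"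
    using A by (intro decseq_SucI m_mono) (auto simp: decseq_Suc_iff bdd_borel_def)
  then obtain L where L: "(\<lambda>n. m (A n)) \<longlonglongrightarrow> L" "\<And>n. L \<le> m (A n)"
    using decseq_convergent[of "\<lambda>n. m (A n)" 0] m_nonneg A(1) by blast
  have "L \<ge> 0"
    using m_nonneg A(1) by (intro LIMSEQ_le_const[OF L(1)]) auto
  have "prob (void_event (A n)) \<le> void_prob \<rho> a (k * L)" for n
    using prob_void_event[OF A(1)] L(2)[of n] \<open>L \<ge> 0\<close> rho_pos a_pos k_pos
    by (auto intro!: void_prob_antimono)
  then have "1 \<le> void_prob \<rho> a (k * L)"
    using prob_void_event_decseq_tendsto_1[OF finite A] by (intro LIMSEQ_le_const2) auto
  then have "L = 0"
    using void_prob_less_1[of \<rho> a "k * L"] rho_pos a_pos k_pos \<open>L \<ge> 0\<close>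
    by (cases "L = 0") auto
  with L(1) show ?thesis
    by simp
qed

lemma m_singleton_eq_0:
  assumes "prob {\<omega>\<in>space M. emeasure (N \<omega>) {x} > 0} = 0"
  shows "m {x} = 0"
proof -
  have "bdd_borel {x}"
    by (simp add: bdd_borel_def)
  have "{\<omega>\<in>space M. emeasure (N \<omega>) {x} > 0} = space M - void_event {x}"
    by (auto simp: void_event_def zero_less_iff_neq_zero)
  then have "prob (void_event {x}) = 1"
    using assms prob_compl[of "void_event {x}"] void_event_in_events[of "{x}"]
    by (simp add: Diff_Diff_Int sets.Int_space_eq1)
  then have "void_prob \<rho> a (k * m {x}) = void_prob \<rho> a 0"
    using prob_void_event[OF \<open>bdd_borel {x}\<close>] rho_pos a_pos by (simp add: void_prob_0)
  then show ?thesis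
    using m_nonneg[OF \<open>bdd_borel {x}\<close>] rho_pos a_pos k_pos by (simp add: void_prob_eq_iff)
qed

end

theorem theorem5:
  fixes M :: "'w measure"
    and N :: "'w \<Rightarrow> ('a::polish_space) measure"
    and m :: "'a set \<Rightarrow> real"
    and a \<rho> k :: real
  assumes "prob_space M"
    and "a > 0" and "\<rho> > 0" and "k > 0"
    \<comment> \<open>N is a point process: every realisation is an integer-valued Borel measure,
        and N(A) is a random variable for every Borel set A\<close>
    and "\<And>\<omega>. sets (N \<omega>) = sets borel"
    and "\<And>\<omega> A. A \<in> sets borel \<Longrightarrow> emeasure (N \<omega>) A \<in> range of_nat \<union> {\<infinity>}"
    and "\<And>A. A \<in> sets borel \<Longrightarrow> (\<lambda>\<omega>. emeasure (N \<omega>) A) \<in> borel_measurable M"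
    \<comment> \<open>(I) almost surely boundedly finite, no fixed atoms\<close>
    and "AE \<omega> in M. \<forall>A. bdd_borel A \<longrightarrow> emeasure (N \<omega>) A < \<infinity>"
    and "\<And>x. measure M {\<omega>\<in>space M. emeasure (N \<omega>) {x} > 0} = 0"
    \<comment> \<open>(II) finite-dimensional distributions are MGWD\<close>
    and "\<And>A. bdd_borel A \<Longrightarrow> m A \<ge> 0"
    and "\<And>l (A :: nat \<Rightarrow> 'a set) (xs :: nat \<Rightarrow> nat).
           (\<forall>i<l. bdd_borel (A i)) \<Longrightarrow> disjoint_family_on A {..<l} \<Longrightarrow>
           measure M {\<omega>\<in>space M. \<forall>i<l. emeasure (N \<omega>) (A i) = of_nat (xs i)}
             = mgwd a (\<lambda>i. k * m (A i)) \<rho> l xs"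
  shows "\<exists>\<mu> :: 'a measure. sets \<mu> = sets borel
           \<and> (\<forall>A. bdd_borel A \<longrightarrow> emeasure \<mu> A < \<infinity>)
           \<and> (\<forall>x. emeasure \<mu> {x} = 0)
           \<and> (\<forall>A. bdd_borel A \<longrightarrow>
                 emeasure \<mu> A = ennreal (m A)
               \<and> measure M {\<omega>\<in>space M. emeasure (N \<omega>) A = 0}
                   = rfact \<rho> (k * measure \<mu> A) / rfact (\<rho> + a) (k * measure \<mu> A))"
proof -
  interpret mgwd_point_process M N m a \<rho> k
    by (intro mgwd_point_process.intro mgwd_point_process_axioms.intro) (fact assms)+
  obtain \<mu> :: "'a measure" where \<mu>: "sets \<mu> = sets borel"
      "\<And>A. bdd_borel A \<Longrightarrow> emeasure \<mu> A = ennreal (m A)"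
    using ex_borel_measure_extending[of m] m_nonneg m_Un m_decseq_tendsto_0[OF assms(8)] by blast
  have measure_\<mu>: "measure \<mu> A = m A" if "bdd_borel A" for A
    using \<mu>(2)[OF that] m_nonneg[OF that] by (simp add: measure_def)
  have "emeasure \<mu> {x} = 0" for x
    using \<mu>(2)[of "{x}"] m_singleton_eq_0[OF assms(9)] by (simp add: bdd_borel_def)
  moreover have "measure M {\<omega>\<in>space M. emeasure (N \<omega>) A = 0}
      = rfact \<rho> (k * measure \<mu> A) / rfact (\<rho> + a) (k * measure \<mu> A)" if "bdd_borel A" for A
    using prob_void_event[OF that] measure_\<mu>[OF that] by (simp add: void_event_def void_prob_def)
  ultimately show ?thesis
    using \<mu> by auto
qed

end
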